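(* Let $X=\{x_1,\dots,x_n\}$ be a finite $T_0$-space with matrix $X_M=(x_{k,l})$, $i$-th row $r_i$ and $j$-th column $c_j$, and let $i\neq j$. Then $x_i\prec x_j$ if and only if $r_i+c_j^{\intercal}=(p_1,\dots,p_n)$ satisfies $p_i=p_j=0$ and $p_k\neq 0$ for every $k\neq i,j$ (here $p_k=x_{i,k}+x_{k,j}$).
   Context: A finite $T_0$-space is identified with a finite poset via $x\le y$ iff $U_x\subseteq U_y$, where $U_x$ is the minimal open set containing $x$. $X_M=(x_{k,l})$ is the $n\times n$ matrix with $x_{k,l}=0$ if $x_k\le x_l$ and $x_{k,l}=1$ otherwise. $x\prec y$ means $x<y$ and there is no $z$ with $x<z<y$. *)

theory Defs
  imports "HOL-Analysis.Analysis"
begin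

definition min_open :: "'a topology \<Rightarrow> 'a \<Rightarrow> 'a set" where
  "min_open T x = \<Inter>{U. openin T U \<and> x \<in> U}"

definition fle :: "'a topology \<Rightarrow> 'a \<Rightarrow> 'a \<Rightarrow> bool" where
  "fle T x y \<longleftrightarrow> x \<in> topspace T \<and> y \<in> topspace T \<and> min_open T x \<subseteq> min_open T y"

definition fless :: "'a topology \<Rightarrow> 'a \<Rightarrow> 'a \<Rightarrow> bool" where
  "fless T x y \<longleftrightarrow> fle T x y \<and> x \<noteq> y"

definition fcover :: "'a topology \<Rightarrow> 'a \<Rightarrow> 'a \<Rightarrow> bool" where
  "fcover T x y \<longleftrightarrow> fless T x y \<and> \<not> (\<exists>z. fless T x z \<and> fless T z y)"

definition space_matrix :: "'a topology \<Rightarrow> (nat \<Rightarrow> 'a) \<Rightarrow> nat \<Rightarrow> nat \<Rightarrow> nat" where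
  "space_matrix T xs k l = (if fle T (xs k) (xs l) then 0 else 1)"

end

theory Submission
  imports Defs
begin

text \<open>Both sides only speak about the specialization preorder: a zero entry of
  \<open>r\<^sub>i + c\<^sub>j\<^sup>T\<close> at position \<open>k\<close> says exactly \<open>x\<^sub>i \<le> x\<^sub>k \<le> x\<^sub>j\<close>, and \<open>x\<^sub>i \<prec> x\<^sub>j\<close> says that
  this happens for \<open>k = i\<close> and \<open>k = j\<close> only. Reflexivity of \<open>\<le>\<close> gives the zeros at
  \<open>i\<close> and \<open>j\<close>.\<close>

lemma fle_refl: "x \<in> topspace T \<Longrightarrow> fle T x x"
  by (simp add: fle_def)

lemma fle_in_topspace: "fle T x y \<Longrightarrow> x \<in> topspace T \<and> y \<in> topspace T"
  by (simp add: fle_def)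

lemma fcover_iff_no_between:
  "fcover T x y \<longleftrightarrow>
     fle T x y \<and> x \<noteq> y \<and>
     (\<forall>z\<in>topspace T. z \<noteq> x \<and> z \<noteq> y \<longrightarrow> \<not> (fle T x z \<and> fle T z y))"
  unfolding fcover_def fless_def by (auto dest: fle_in_topspace)

lemma space_matrix_sum_eq_0_iff:
  "space_matrix T xs i k + space_matrix T xs k j = 0 \<longleftrightarrow>
     fle T (xs i) (xs k) \<and> fle T (xs k) (xs j)"
  by (simp add: space_matrix_def)

theorem mainTheorem13:
  fixes T :: "'a topology" and xs :: "nat \<Rightarrow> 'a" and n i j :: nat
  assumes "finite (topspace T)"
    and "t0_space T"
    and "bij_betw xs {1..n} (topspace T)"
    and "i \<in> {1..n}" and "j \<in> {1..n}" and "i \<noteq> j"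
  shows "fcover T (xs i) (xs j) \<longleftrightarrow>
    (let p = (\<lambda>k. space_matrix T xs i k + space_matrix T xs k j) in
      p i = 0 \<and> p j = 0 \<and> (\<forall>k\<in>{1..n}. k \<noteq> i \<and> k \<noteq> j \<longrightarrow> p k \<noteq> 0))"
proof -
  have inj: "inj_on xs {1..n}" and onto: "topspace T = xs ` {1..n}"
    using assms(3) by (simp_all add: bij_betw_def)
  have in_top: "xs i \<in> topspace T" "xs j \<in> topspace T"
    using assms(3-5) bij_betwE by blast+
  have distinct_pts: "xs k = xs i \<longleftrightarrow> k = i" "xs k = xs j \<longleftrightarrow> k = j" if "k \<in> {1..n}" for k
    using inj that assms(4,5) by (auto dest: inj_onD)
  have "fcover T (xs i) (xs j) \<longleftrightarrow>
      fle T (xs i) (xs j) \<and>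
      (\<forall>k\<in>{1..n}. k \<noteq> i \<and> k \<noteq> j \<longrightarrow> \<not> (fle T (xs i) (xs k) \<and> fle T (xs k) (xs j)))"
    unfolding fcover_iff_no_between onto ball_simps
    using distinct_pts assms(4-6) by (auto simp del: atLeastAtMost_iff)
  then show ?thesis
    unfolding Let_def space_matrix_sum_eq_0_iff using in_top by (simp add: fle_refl)
qed

end
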